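(* Let $D$ be a digraph and let $H$ be a source-sink-split of $D$. Then $\operatorname{bw}(u(H))=\operatorname{dbw}(D)$.
   Context: All digraphs are finite and loopless, without parallel edges. A source has no incoming edges, a sink no outgoing edges. Two distinct vertices are source/sink-identifiable if both are sources or both are sinks; identifying them replaces them by one new vertex $\gamma$ with $N^-(\gamma)=N^-(x)\cup N^-(y)$ and $N^+(\gamma)=N^+(x)\cup N^+(y)$. A digraph $H$ is a source-sink-split of $D$ if every source and every sink of $H$ has degree exactly $1$ and $D$ is obtained from $H$ by a finite sequence of identifications of source/sink-identifiable pairs. $u(H)$ is the undirected multigraph with one edge $xy$ per directed edge $\vec{xy}$. Branch-width of an undirected multigraph $G$: minimum over $(T,\tau)$ ($T$ a tree of maximum degree at most three, $\tau$ a bijection from leaves onto $E(G)$) of the maximum over tree edges $t$ of the number of vertices incident with an edge of $\tau(Y)$ and an edge of $E(G)\setminus\tau(Y)$, $Y$ the leaves on one side of $T-t$ (0 if no tree edges). Directed branch-width: same with $\beta$ onto $E(D)$ and order $|S^V_{\beta(Y)}\cup S^V_{E(D)\setminus\beta(Y)}|$, where $S^V_X=\{y: \exists x,z,\ \vec{xy}\in E(D)\setminus X,\ \vec{yz}\in X\}$. *)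

theory Defs
  imports Main
begin

definition wf_digraph :: "'a set \<Rightarrow> ('a \<times> 'a) set \<Rightarrow> bool" where
  "wf_digraph V E \<longleftrightarrow> finite V \<and> E \<subseteq> V \<times> V \<and> (\<forall>x. (x, x) \<notin> E)"

definition in_nbrs :: "('a \<times> 'a) set \<Rightarrow> 'a \<Rightarrow> 'a set" where
  "in_nbrs E x = {y. (y, x) \<in> E}"

definition out_nbrs :: "('a \<times> 'a) set \<Rightarrow> 'a \<Rightarrow> 'a set" where
  "out_nbrs E x = {y. (x, y) \<in> E}"

definition is_source :: "'a set \<Rightarrow> ('a \<times> 'a) set \<Rightarrow> 'a \<Rightarrow> bool" where
  "is_source V E x \<longleftrightarrow> x \<in> V \<and> in_nbrs E x = {}"

definition is_sink :: "'a set \<Rightarrow> ('a \<times> 'a) set \<Rightarrow> 'a \<Rightarrow> bool" where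
  "is_sink V E x \<longleftrightarrow> x \<in> V \<and> out_nbrs E x = {}"

definition vdegree :: "('a \<times> 'a) set \<Rightarrow> 'a \<Rightarrow> nat" where
  "vdegree E x = card (in_nbrs E x) + card (out_nbrs E x)"

definition ident_step :: "'a set \<times> ('a \<times> 'a) set \<Rightarrow> 'a set \<times> ('a \<times> 'a) set \<Rightarrow> bool" where
  "ident_step G G' \<longleftrightarrow> (\<exists>x y g. x \<noteq> y \<and>
      ((is_source (fst G) (snd G) x \<and> is_source (fst G) (snd G) y) \<or>
       (is_sink (fst G) (snd G) x \<and> is_sink (fst G) (snd G) y)) \<and>
      g \<notin> fst G - {x, y} \<and>
      fst G' = insert g (fst G - {x, y}) \<and>
      snd G' = {(a, b). (a, b) \<in> snd G \<and> a \<notin> {x, y} \<and> b \<notin> {x, y}}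
               \<union> {(a, g) | a. a \<in> in_nbrs (snd G) x \<union> in_nbrs (snd G) y}
               \<union> {(g, b) | b. b \<in> out_nbrs (snd G) x \<union> out_nbrs (snd G) y})"

definition digraph_iso :: "'a set \<Rightarrow> ('a \<times> 'a) set \<Rightarrow> 'b set \<Rightarrow> ('b \<times> 'b) set \<Rightarrow> bool" where
  "digraph_iso V E V' E' \<longleftrightarrow>
     (\<exists>f. bij_betw f V V' \<and> E' = (\<lambda>(a, b). (f a, f b)) ` E)"

text \<open>D (vertices VD, edges ED) is obtained from H by a finite sequence of identifications
  (up to the naming of the newly created vertices, i.e. up to isomorphism).\<close>

definition source_sink_split :: "'a set \<Rightarrow> ('a \<times> 'a) set \<Rightarrow> 'b set \<Rightarrow> ('b \<times> 'b) set \<Rightarrow> bool" where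
  "source_sink_split VH EH VD ED \<longleftrightarrow>
     wf_digraph VH EH \<and>
     (\<forall>x. is_source VH EH x \<or> is_sink VH EH x \<longrightarrow> vdegree EH x = 1) \<and>
     (\<exists>V' E'. ident_step\<^sup>*\<^sup>* (VH, EH) (V', E') \<and> digraph_iso V' E' VD ED)"

text \<open>A tree with node set N and edge set TE (each edge a 2-element set of nodes):
  connected and every edge is a bridge.\<close>

definition tree_rel :: "nat set set \<Rightarrow> (nat \<times> nat) set" where
  "tree_rel TE = {(a, b). {a, b} \<in> TE}"

definition is_tree :: "nat set \<Rightarrow> nat set set \<Rightarrow> bool" where
  "is_tree N TE \<longleftrightarrow> finite N \<and> N \<noteq> {} \<and>
     (\<forall>e\<in>TE. e \<subseteq> N \<and> card e = 2) \<and>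
     (\<forall>a\<in>N. \<forall>b\<in>N. (a, b) \<in> (tree_rel TE)\<^sup>*) \<and>
     (\<forall>a b. {a, b} \<in> TE \<longrightarrow> (a, b) \<notin> (tree_rel (TE - {{a, b}}))\<^sup>*)"

definition tdeg :: "nat set set \<Rightarrow> nat \<Rightarrow> nat" where
  "tdeg TE n = card {e \<in> TE. n \<in> e}"

definition tleaves :: "nat set \<Rightarrow> nat set set \<Rightarrow> nat set" where
  "tleaves N TE = {n \<in> N. tdeg TE n \<le> 1}"

definition tside :: "nat set \<Rightarrow> nat set set \<Rightarrow> nat \<Rightarrow> nat \<Rightarrow> nat set" where
  "tside N TE a b = {l \<in> tleaves N TE. (a, l) \<in> (tree_rel (TE - {{a, b}}))\<^sup>*}"

definition decomp_width :: "('e set \<Rightarrow> nat) \<Rightarrow> nat set \<Rightarrow> nat set set \<Rightarrow> (nat \<Rightarrow> 'e) \<Rightarrow> nat" where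
  "decomp_width ord N TE \<tau> =
     Max (insert 0 {ord (\<tau> ` tside N TE a b) | a b. {a, b} \<in> TE})"

definition gen_branch_width :: "'e set \<Rightarrow> ('e set \<Rightarrow> nat) \<Rightarrow> nat" where
  "gen_branch_width F ord = Inf {w. \<exists>N TE \<tau>. is_tree N TE \<and> (\<forall>n\<in>N. tdeg TE n \<le> 3) \<and>
        bij_betw \<tau> (tleaves N TE) F \<and> w = decomp_width ord N TE \<tau>}"

text \<open>Undirected multigraph given by an edge set F and an endpoint map.\<close>
definition ug_order :: "'e set \<Rightarrow> ('e \<Rightarrow> 'v set) \<Rightarrow> 'e set \<Rightarrow> nat" where
  "ug_order F ends X = card ((\<Union> (ends ` X)) \<inter> (\<Union> (ends ` (F - X))))"

definition branch_width :: "'e set \<Rightarrow> ('e \<Rightarrow> 'v set) \<Rightarrow> nat" where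
  "branch_width F ends = gen_branch_width F (ug_order F ends)"

text \<open>u(H): one undirected edge xy per directed edge (x,y); edges are indexed by E(H).\<close>
definition u_ends :: "'a \<times> 'a \<Rightarrow> 'a set" where
  "u_ends e = {fst e, snd e}"

definition SV :: "('a \<times> 'a) set \<Rightarrow> ('a \<times> 'a) set \<Rightarrow> 'a set" where
  "SV E X = {y. \<exists>x z. (x, y) \<in> E - X \<and> (y, z) \<in> X}"

definition dbw_order :: "('a \<times> 'a) set \<Rightarrow> ('a \<times> 'a) set \<Rightarrow> nat" where
  "dbw_order E X = card (SV E X \<union> SV E (E - X))"

definition dir_branch_width :: "('a \<times> 'a) set \<Rightarrow> nat" where
  "dir_branch_width E = gen_branch_width E (dbw_order E)"

end

theory Submission
  imports Defs
begin

text \<open>Let \<open>\<phi>\<close> map V(H) onto V(D) as the identifications do; it induces a surjection \<open>\<pi>\<close>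
  from E(H) onto E(D). Since sources and sinks of H have degree 1, a vertex of H on two distinct
  edges has an in- and an out-edge, so \<open>\<phi>\<close> is injective on such vertices, and these are the
  only vertices counted by orders in u(H). Hence, if Y is the \<open>\<pi>\<close>-preimage of X, the vertices
  separated by Y inject into the vertices counted by the directed order of X; and if \<open>\<pi>\<close> maps
  Y onto X and its complement onto the complement of X, every vertex counted for X is the image
  of a vertex separated by Y.

  A branch decomposition of D therefore turns into one of u(H) of no larger width by expanding
  every leaf into a subtree carrying its \<open>\<pi>\<close>-fibre: each new side is a preimage of an old side,
  or it or its complement lies in a single fibre, and such a side is no more expensive than a
  single edge of D, which is itself a side of the old decomposition. Conversely, restricting a
  branch decomposition of u(H) to one leaf per fibre and relabelling by \<open>\<pi>\<close> gives one of D of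
  no larger width.\<close>

lemma rtrancl_from_isolated:
  assumes "(a, y) \<in> R\<^sup>*" "\<forall>b. (a, b) \<notin> R"
  shows "y = a"
  using assms by (auto elim: converse_rtranclE)

lemma tree_rel_insert: "tree_rel (insert {n, p} TE) = tree_rel TE \<union> {(n, p), (p, n)}"
  unfolding tree_rel_def by (auto simp: doubleton_eq_iff)

lemma tree_rel_converse: "(tree_rel TE)\<inverse> = tree_rel TE"
  unfolding tree_rel_def by (auto simp: insert_commute)

lemma tree_rel_avoiding:
  assumes "\<forall>e\<in>TE. n \<notin> e"
  shows "(n, b) \<notin> tree_rel TE" "(b, n) \<notin> tree_rel TE"
  using assms unfolding tree_rel_def by auto

lemma rtrancl_tree_rel_avoiding:
  assumes "\<forall>e\<in>TE. n \<notin> e" "(x, y) \<in> (tree_rel TE)\<^sup>*" "x = n \<or> y = n"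
  shows "x = y"
  using assms(3)
proof
  assume "x = n"
  then show ?thesis using rtrancl_from_isolated[OF assms(2)] tree_rel_avoiding[OF assms(1)] by auto
next
  assume "y = n"
  have "(y, x) \<in> (tree_rel TE)\<^sup>*"
    using assms(2) rtrancl_converseI[of x y "tree_rel TE"] by (simp add: tree_rel_converse)
  then show ?thesis
    using rtrancl_from_isolated[of y x] \<open>y = n\<close> tree_rel_avoiding[OF assms(1)] by auto
qed

lemma rtrancl_Un_pendant:
  assumes "\<forall>b. (n, b) \<notin> R" "\<forall>b. (b, n) \<notin> R" "n \<noteq> p" "a \<noteq> n"
    and "(a, y) \<in> (R \<union> {(n, p), (p, n)})\<^sup>*"
  shows "(y \<noteq> n \<and> (a, y) \<in> R\<^sup>*) \<or> (y = n \<and> (a, p) \<in> R\<^sup>*)"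
  using assms(5)
proof (induction rule: rtrancl_induct)
  case base
  then show ?case using assms(4) by auto
next
  case (step y z)
  then show ?case using assms(1-3) by (auto intro: rtrancl_into_rtrancl)
qed

lemma rtrancl_tree_rel_insert_pendant:
  assumes "\<forall>e\<in>TE. n \<notin> e" "n \<noteq> p" "a \<noteq> n"
  shows "(a, y) \<in> (tree_rel (insert {n, p} TE))\<^sup>* \<longleftrightarrow>
     (y \<noteq> n \<and> (a, y) \<in> (tree_rel TE)\<^sup>*) \<or> (y = n \<and> (a, p) \<in> (tree_rel TE)\<^sup>*)"
proof
  assume "(a, y) \<in> (tree_rel (insert {n, p} TE))\<^sup>*"
  then show "(y \<noteq> n \<and> (a, y) \<in> (tree_rel TE)\<^sup>*) \<or> (y = n \<and> (a, p) \<in> (tree_rel TE)\<^sup>*)"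
    using rtrancl_Un_pendant[of n "tree_rel TE" p a y] tree_rel_avoiding[OF assms(1)] assms
    by (simp add: tree_rel_insert)
next
  have mono: "(tree_rel TE)\<^sup>* \<subseteq> (tree_rel (insert {n, p} TE))\<^sup>*"
    by (rule rtrancl_mono) (auto simp: tree_rel_insert)
  have "(p, n) \<in> tree_rel (insert {n, p} TE)"
    by (auto simp: tree_rel_insert)
  then show "(y \<noteq> n \<and> (a, y) \<in> (tree_rel TE)\<^sup>*) \<or> (y = n \<and> (a, p) \<in> (tree_rel TE)\<^sup>*) \<Longrightarrow>
      (a, y) \<in> (tree_rel (insert {n, p} TE))\<^sup>*"
    using mono by (auto intro: rtrancl_into_rtrancl)
qed

lemma rtrancl_tree_rel_insert_from_pendant:
  assumes "\<forall>e\<in>TE. n \<notin> e"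
  shows "(n, y) \<in> (tree_rel (insert {n, p} TE))\<^sup>* \<longleftrightarrow>
     y = n \<or> (p, y) \<in> (tree_rel (insert {n, p} TE))\<^sup>*"
proof
  assume "(n, y) \<in> (tree_rel (insert {n, p} TE))\<^sup>*"
  then show "y = n \<or> (p, y) \<in> (tree_rel (insert {n, p} TE))\<^sup>*"
  proof (cases rule: converse_rtranclE)
    case (step z)
    then have "z = p" using tree_rel_avoiding[OF assms] by (auto simp: tree_rel_insert)
    then show ?thesis using step by auto
  qed auto
next
  have "(n, p) \<in> tree_rel (insert {n, p} TE)" by (auto simp: tree_rel_insert)
  then show "y = n \<or> (p, y) \<in> (tree_rel (insert {n, p} TE))\<^sup>* \<Longrightarrow>
      (n, y) \<in> (tree_rel (insert {n, p} TE))\<^sup>*"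
    by (auto intro: converse_rtrancl_into_rtrancl)
qed

lemma is_tree_finite_edges: "is_tree N TE \<Longrightarrow> finite TE"
  unfolding is_tree_def by (meson Pow_iff finite_Pow_iff rev_finite_subset subsetI)

lemma is_tree_edge_nodes: "is_tree N TE \<Longrightarrow> {a, b} \<in> TE \<Longrightarrow> a \<in> N \<and> b \<in> N"
  unfolding is_tree_def by auto

lemma is_tree_add_pendant:
  assumes T: "is_tree N TE" and n: "n \<notin> N" and p: "p \<in> N"
  shows "is_tree (insert n N) (insert {n, p} TE)"
proof -
  have sub: "\<forall>e\<in>TE. e \<subseteq> N" and c2: "\<forall>e\<in>TE. card e = 2"
    and con: "\<forall>a\<in>N. \<forall>b\<in>N. (a, b) \<in> (tree_rel TE)\<^sup>*"
    and br: "\<forall>a b. {a, b} \<in> TE \<longrightarrow> (a, b) \<notin> (tree_rel (TE - {{a, b}}))\<^sup>*"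
    and fin: "finite N"
    using T unfolding is_tree_def by auto
  have ne: "\<forall>e\<in>TE. n \<notin> e" using sub n by auto
  have np: "n \<noteq> p" using n p by auto
  note reach = rtrancl_tree_rel_insert_pendant[OF _ np]
  show ?thesis unfolding is_tree_def
  proof (intro conjI)
    show "finite (insert n N)" "insert n N \<noteq> {}" using fin by auto
    show "\<forall>e\<in>insert {n, p} TE. e \<subseteq> insert n N \<and> card e = 2"
      using sub c2 p np by auto
    show "\<forall>a\<in>insert n N. \<forall>b\<in>insert n N. (a, b) \<in> (tree_rel (insert {n, p} TE))\<^sup>*"
    proof (intro ballI)
      fix a b assume a: "a \<in> insert n N" and b: "b \<in> insert n N"
      have pb: "(p, b) \<in> (tree_rel (insert {n, p} TE))\<^sup>*"
        using reach[OF ne, of p b] np con p b by auto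
      show "(a, b) \<in> (tree_rel (insert {n, p} TE))\<^sup>*"
      proof (cases "a = n")
        case True
        then show ?thesis using rtrancl_tree_rel_insert_from_pendant[OF ne, of b p] pb by auto
      next
        case False
        then show ?thesis using reach[OF ne False, of b] a con p b by auto
      qed
    qed
    show "\<forall>a b. {a, b} \<in> insert {n, p} TE \<longrightarrow> (a, b) \<notin> (tree_rel (insert {n, p} TE - {{a, b}}))\<^sup>*"
    proof (intro allI impI)
      fix a b assume ab: "{a, b} \<in> insert {n, p} TE"
      show "(a, b) \<notin> (tree_rel (insert {n, p} TE - {{a, b}}))\<^sup>*"
      proof (cases "{a, b} = {n, p}")
        case True
        then have "insert {n, p} TE - {{a, b}} = TE" using ne by auto
        moreover have "a \<noteq> b" "a = n \<or> b = n" using True np by (auto simp: doubleton_eq_iff)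
        ultimately show ?thesis using rtrancl_tree_rel_avoiding[OF ne, of a b] by auto
      next
        case False
        then have abT: "{a, b} \<in> TE" using ab by auto
        then have "a \<noteq> n" "b \<noteq> n" using ne by auto
        moreover have "insert {n, p} TE - {{a, b}} = insert {n, p} (TE - {{a, b}})"
          using False by auto
        moreover have "\<forall>e\<in>TE - {{a, b}}. n \<notin> e" using ne by auto
        ultimately show ?thesis using reach[of "TE - {{a, b}}" a b] br[rule_format, OF abT] by simp
      qed
    qed
  qed
qed

lemma is_tree_remove_pendant:
  assumes T: "is_tree (insert n N) (insert {n, p} TE)" and n: "n \<notin> N" and p: "p \<in> N"
    and sub: "\<forall>e\<in>TE. e \<subseteq> N"
  shows "is_tree N TE"
proof -
  have ne: "\<forall>e\<in>TE. n \<notin> e" using sub n by auto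
  have np: "n \<noteq> p" using n p by auto
  have c2: "\<forall>e\<in>TE. card e = 2"
    and con: "\<forall>a\<in>insert n N. \<forall>b\<in>insert n N. (a, b) \<in> (tree_rel (insert {n, p} TE))\<^sup>*"
    and br: "\<forall>a b. {a, b} \<in> insert {n, p} TE \<longrightarrow> (a, b) \<notin> (tree_rel (insert {n, p} TE - {{a, b}}))\<^sup>*"
    and fin: "finite (insert n N)"
    using T unfolding is_tree_def by auto
  show ?thesis unfolding is_tree_def
  proof (intro conjI)
    show "finite N" "N \<noteq> {}" using fin p by auto
    show "\<forall>e\<in>TE. e \<subseteq> N \<and> card e = 2" using sub c2 by auto
    show "\<forall>a\<in>N. \<forall>b\<in>N. (a, b) \<in> (tree_rel TE)\<^sup>*"
    proof (intro ballI)
      fix a b assume "a \<in> N" "b \<in> N"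
      moreover from this have "a \<noteq> n" "b \<noteq> n" using n by auto
      ultimately show "(a, b) \<in> (tree_rel TE)\<^sup>*"
        using rtrancl_tree_rel_insert_pendant[OF ne np, of a b] con by auto
    qed
    show "\<forall>a b. {a, b} \<in> TE \<longrightarrow> (a, b) \<notin> (tree_rel (TE - {{a, b}}))\<^sup>*"
    proof (intro allI impI notI)
      fix a b assume ab: "{a, b} \<in> TE" and r: "(a, b) \<in> (tree_rel (TE - {{a, b}}))\<^sup>*"
      have "(tree_rel (TE - {{a, b}}))\<^sup>* \<subseteq> (tree_rel (insert {n, p} TE - {{a, b}}))\<^sup>*"
        by (rule rtrancl_mono) (auto simp: tree_rel_def)
      then show False using br ab r by auto
    qed
  qed
qed

lemma tdeg_insert:
  assumes "finite TE" "E \<notin> TE"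
  shows "tdeg (insert E TE) x = tdeg TE x + (if x \<in> E then 1 else 0)"
proof -
  have "{e \<in> insert E TE. x \<in> e} =
      (if x \<in> E then insert E {e \<in> TE. x \<in> e} else {e \<in> TE. x \<in> e})"
    by auto
  then show ?thesis unfolding tdeg_def using assms by auto
qed

lemma tdeg_eq_0:
  assumes "\<forall>e\<in>TE. n \<notin> e"
  shows "tdeg TE n = 0"
proof -
  have "{e \<in> TE. n \<in> e} = {}" using assms by auto
  then show ?thesis unfolding tdeg_def by (simp only: card.empty)
qed

lemma tree_leaf_pendant_edge:
  assumes T: "is_tree N TE" and l: "l \<in> tleaves N TE" and Nl: "N \<noteq> {l}"
  obtains p where "{l, p} \<in> TE" "l \<noteq> p" "p \<in> N" "\<forall>e\<in>TE - {{l, p}}. l \<notin> e"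
proof -
  have lN: "l \<in> N" and dl: "tdeg TE l \<le> 1" using l unfolding tleaves_def by auto
  obtain m where m: "m \<in> N" "m \<noteq> l" using Nl lN by auto
  have "(l, m) \<in> (tree_rel TE)\<^sup>*" using T lN m unfolding is_tree_def by auto
  then obtain p where "(l, p) \<in> tree_rel TE" using m(2) by (auto elim: converse_rtranclE)
  then have lpT: "{l, p} \<in> TE" unfolding tree_rel_def by auto
  have "card {l, p} = 2" "{l, p} \<subseteq> N" using T lpT unfolding is_tree_def by auto
  then have lp: "l \<noteq> p" "p \<in> N" by (auto simp: card_insert_if split: if_splits)
  have "\<forall>e\<in>TE - {{l, p}}. l \<notin> e"
  proof (intro ballI notI)
    fix e assume e: "e \<in> TE - {{l, p}}" and "l \<in> e"
    then have "{e, {l, p}} \<subseteq> {e \<in> TE. l \<in> e}" using e lpT by auto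
    then have "card {e, {l, p}} \<le> tdeg TE l" unfolding tdeg_def
      by (intro card_mono) (use is_tree_finite_edges[OF T] in auto)
    then show False using e dl by auto
  qed
  then show ?thesis using that lpT lp by simp
qed

lemma tside_subset_if_isolated:
  assumes "\<forall>e\<in>TE - {{a, b}}. a \<notin> e"
  shows "tside N TE a b \<subseteq> {a}"
proof
  fix x assume "x \<in> tside N TE a b"
  then have "(a, x) \<in> (tree_rel (TE - {{a, b}}))\<^sup>*" unfolding tside_def by auto
  then show "x \<in> {a}" using rtrancl_from_isolated[of a x] tree_rel_avoiding(1)[OF assms] by auto
qed

lemma tleaves_subset_tside:
  assumes "is_tree N' (TE - {{a, b}})" "a \<in> N'"
  shows "tleaves N TE \<inter> N' \<subseteq> tside N TE a b"
proof -
  have "\<forall>u\<in>N'. \<forall>v\<in>N'. (u, v) \<in> (tree_rel (TE - {{a, b}}))\<^sup>*"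
    using assms(1) unfolding is_tree_def by blast
  then show ?thesis using assms(2) unfolding tside_def by blast
qed

lemma decomp_width_finite:
  assumes "is_tree N TE"
  shows "finite {ord (\<tau> ` tside N TE a b) | a b. {a, b} \<in> TE}"
proof -
  have "{ord (\<tau> ` tside N TE a b) | a b. {a, b} \<in> TE} \<subseteq>
      (\<lambda>(a, b). ord (\<tau> ` tside N TE a b)) ` (N \<times> N)"
    using is_tree_edge_nodes[OF assms] by fastforce
  moreover have "finite N" using assms unfolding is_tree_def by auto
  ultimately show ?thesis by (meson finite_SigmaI finite_imageI finite_subset)
qed

lemma decomp_width_ge:
  assumes "is_tree N TE" "{a, b} \<in> TE"
  shows "ord (\<tau> ` tside N TE a b) \<le> decomp_width ord N TE \<tau>"
  unfolding decomp_width_def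
  by (rule Max_ge) (use decomp_width_finite[OF assms(1)] assms(2) in auto)

lemma decomp_width_le:
  assumes "is_tree N TE" "\<And>a b. {a, b} \<in> TE \<Longrightarrow> ord (\<tau> ` tside N TE a b) \<le> w"
  shows "decomp_width ord N TE \<tau> \<le> w"
  unfolding decomp_width_def
  by (rule Max.boundedI) (use decomp_width_finite[OF assms(1)] assms(2) in auto)

lemma decomp_width_no_leaves:
  assumes "is_tree N TE" "tleaves N TE = {}" "ord {} = 0"
  shows "decomp_width ord N TE \<tau> = 0"
proof -
  have "tside N TE a b = {}" for a b using assms(2) unfolding tside_def by auto
  then have "decomp_width ord N TE \<tau> \<le> 0" using assms(3) by (intro decomp_width_le[OF assms(1)]) auto
  then show ?thesis by simp
qed

lemma order_singleton_le_decomp_width: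
  assumes T: "is_tree N TE" and bij: "bij_betw \<tau> (tleaves N TE) F" and d: "d \<in> F"
    and ord_F: "ord F = 0"
  shows "ord {d} \<le> decomp_width ord N TE \<tau>"
proof -
  obtain l where l: "l \<in> tleaves N TE" "\<tau> l = d" using bij d unfolding bij_betw_def by auto
  show ?thesis
  proof (cases "N = {l}")
    case True
    then have "tleaves N TE \<subseteq> {l}" unfolding tleaves_def by auto
    then have "F = {d}" using bij d l unfolding bij_betw_def by auto
    then show ?thesis using ord_F by simp
  next
    case False
    then obtain p where p: "{l, p} \<in> TE" "\<forall>e\<in>TE - {{l, p}}. l \<notin> e"
      using tree_leaf_pendant_edge[OF T l(1)] by metis
    have "tside N TE l p \<subseteq> {l}" using tside_subset_if_isolated[OF p(2)] .
    moreover have "l \<in> tside N TE l p" using l(1) unfolding tside_def by auto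
    ultimately have "\<tau> ` tside N TE l p = {d}" using l by auto
    then show ?thesis using decomp_width_ge[OF T p(1), of ord \<tau>] by simp
  qed
qed

lemma is_tree_restrict_leaves:
  assumes "is_tree N TE" "\<forall>n\<in>N. tdeg TE n \<le> 3" "M \<subseteq> tleaves N TE" "M \<noteq> {}"
  shows "\<exists>N' TE'. is_tree N' TE' \<and> (\<forall>n\<in>N'. tdeg TE' n \<le> 3) \<and> tleaves N' TE' = M \<and>
     TE' \<subseteq> TE \<and> (\<forall>a b. {a, b} \<in> TE' \<longrightarrow> tside N' TE' a b = tside N TE a b \<inter> M)"
  using assms
proof (induction "card N" arbitrary: N TE rule: less_induct)
  case less
  note T = less.prems(1)
  show ?case
  proof (cases "tleaves N TE = M")
    case True
    then have "tside N TE a b \<subseteq> M" for a b unfolding tside_def by auto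
    then show ?thesis using True less.prems by (intro exI[of _ N] exI[of _ TE]) auto
  next
    case False
    then obtain l where l: "l \<in> tleaves N TE" "l \<notin> M" using less.prems(3) by auto
    have lN: "l \<in> N" using l unfolding tleaves_def by auto
    have "N \<noteq> {l}" using less.prems(3,4) l unfolding tleaves_def by auto
    then obtain p where p: "{l, p} \<in> TE" "l \<noteq> p" "p \<in> N" "\<forall>e\<in>TE - {{l, p}}. l \<notin> e"
      using tree_leaf_pendant_edge[OF T l(1)] by metis
    define N0 where "N0 = N - {l}"
    define TE0 where "TE0 = TE - {{l, p}}"
    have NN: "N = insert l N0" and TT: "TE = insert {l, p} TE0"
      using lN p(1) unfolding N0_def TE0_def by auto
    have lN0: "l \<notin> N0" and pN0: "p \<in> N0" using p unfolding N0_def by auto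
    have sub0: "\<forall>e\<in>TE0. e \<subseteq> N0"
      using T p(4) unfolding is_tree_def N0_def TE0_def by auto
    have T0: "is_tree N0 TE0"
      using is_tree_remove_pendant[of l N0 p TE0] T lN0 pN0 sub0 NN TT by auto
    have notin: "{l, p} \<notin> TE0" unfolding TE0_def by auto
    have degle: "tdeg TE0 x \<le> tdeg TE x" for x
      using tdeg_insert[OF is_tree_finite_edges[OF T0] notin, of x] TT by auto
    have deg0: "\<forall>n\<in>N0. tdeg TE0 n \<le> 3"
      using less.prems(2) degle unfolding N0_def by (meson DiffD1 le_trans)
    have M0: "M \<subseteq> tleaves N0 TE0"
      using less.prems(3) l(2) degle unfolding tleaves_def N0_def by (auto intro: le_trans)
    have "card N0 < card N" using lN T unfolding N0_def is_tree_def by (meson card_Diff1_less)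
    then obtain N' TE' where IH: "is_tree N' TE'" "\<forall>n\<in>N'. tdeg TE' n \<le> 3" "tleaves N' TE' = M"
        "TE' \<subseteq> TE0" "\<forall>a b. {a, b} \<in> TE' \<longrightarrow> tside N' TE' a b = tside N0 TE0 a b \<inter> M"
      using less.hyps T0 deg0 M0 less.prems(4) by blast
    have side: "tside N0 TE0 a b \<inter> M = tside N TE a b \<inter> M" if ab: "{a, b} \<in> TE0" for a b
    proof -
      have "TE - {{a, b}} = insert {l, p} (TE0 - {{a, b}})" using TT ab notin by auto
      moreover have "\<forall>e\<in>TE0 - {{a, b}}. l \<notin> e" and "a \<noteq> l" using sub0 lN0 ab by auto
      ultimately have "x \<in> M \<Longrightarrow>
          (a, x) \<in> (tree_rel (TE - {{a, b}}))\<^sup>* \<longleftrightarrow> (a, x) \<in> (tree_rel (TE0 - {{a, b}}))\<^sup>*" for x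
        using rtrancl_tree_rel_insert_pendant[OF _ p(2)] l(2) by metis
      then show ?thesis using less.prems(3) M0 unfolding tside_def by auto
    qed
    have "\<forall>a b. {a, b} \<in> TE' \<longrightarrow> tside N' TE' a b = tside N TE a b \<inter> M"
      using IH(4,5) side by blast
    then show ?thesis using IH TT by (intro exI[of _ N'] exI[of _ TE']) auto
  qed
qed

lemma split_leaf_is_tree:
  assumes "is_tree N TE" "l \<in> N" "n1 \<notin> N" "n2 \<notin> N" "n1 \<noteq> n2"
  shows "is_tree (insert n1 (insert n2 N)) (insert {n1, l} (insert {n2, l} TE))"
  using assms by (intro is_tree_add_pendant) auto

lemma split_leaf_tdeg:
  assumes T: "is_tree N TE" and n: "n1 \<notin> N" "n2 \<notin> N" "n1 \<noteq> n2"
  shows "tdeg (insert {n1, l} (insert {n2, l} TE)) x =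
    tdeg TE x + (if x \<in> {n1, l} then 1 else 0) + (if x \<in> {n2, l} then 1 else 0)"
proof -
  have "\<forall>e\<in>TE. e \<subseteq> N" using T unfolding is_tree_def by auto
  then have "{n2, l} \<notin> TE" "{n1, l} \<notin> insert {n2, l} TE"
    using n by (auto simp: doubleton_eq_iff)
  moreover have "finite TE" using is_tree_finite_edges[OF T] .
  ultimately show ?thesis by (simp add: tdeg_insert)
qed

lemma is_tree_tdeg_outside:
  assumes "is_tree N TE" "n \<notin> N"
  shows "tdeg TE n = 0"
  using assms by (intro tdeg_eq_0) (auto simp: is_tree_def)

lemma split_leaf_tleaves:
  assumes T: "is_tree N TE" and l: "l \<in> tleaves N TE" and n: "n1 \<notin> N" "n2 \<notin> N" "n1 \<noteq> n2"
  shows "tleaves (insert n1 (insert n2 N)) (insert {n1, l} (insert {n2, l} TE)) =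
    insert n1 (insert n2 (tleaves N TE - {l}))"
  using split_leaf_tdeg[OF T n] is_tree_tdeg_outside[OF T] n l
  unfolding tleaves_def by auto

lemma split_leaf_tdeg_le_3:
  assumes T: "is_tree N TE" and dg: "\<forall>n\<in>N. tdeg TE n \<le> 3" and l: "l \<in> tleaves N TE"
    and n: "n1 \<notin> N" "n2 \<notin> N" "n1 \<noteq> n2"
  shows "\<forall>n\<in>insert n1 (insert n2 N). tdeg (insert {n1, l} (insert {n2, l} TE)) n \<le> 3"
  using split_leaf_tdeg[OF T n] is_tree_tdeg_outside[OF T] dg n l
  unfolding tleaves_def by auto

lemma split_leaf_tside_new_edge:
  assumes T: "is_tree N TE" and l: "l \<in> N" and n: "n1 \<notin> N" "n2 \<notin> N" "n1 \<noteq> n2"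
    and ab: "{a, b} = {n1, l}"
  defines "N' \<equiv> insert n1 (insert n2 N)" and "TE' \<equiv> insert {n1, l} (insert {n2, l} TE)"
  shows "\<exists>m. tside N' TE' a b \<subseteq> {m} \<or> tleaves N' TE' - tside N' TE' a b \<subseteq> {m}"
proof -
  have T2: "is_tree (insert n2 N) (insert {n2, l} TE)"
    using is_tree_add_pendant[OF T n(2) l] .
  have avoid: "\<forall>e\<in>insert {n2, l} TE. n1 \<notin> e"
    using T2 n unfolding is_tree_def by auto
  then have rm: "TE' - {{a, b}} = insert {n2, l} TE"
    unfolding TE'_def ab by auto
  from ab consider "a = n1" | "a = l" "b = n1" by (auto simp: doubleton_eq_iff)
  then show ?thesis
  proof cases
    case 1
    then have "tside N' TE' a b \<subseteq> {n1}" using tside_subset_if_isolated[of TE' a b N'] rm avoid by auto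
    then show ?thesis by blast
  next
    case 2
    then have "tleaves N' TE' \<inter> insert n2 N \<subseteq> tside N' TE' a b"
      using tleaves_subset_tside[of "insert n2 N" TE' a b N'] rm T2 l by auto
    then have "tleaves N' TE' - tside N' TE' a b \<subseteq> {n1}" unfolding N'_def tleaves_def by auto
    then show ?thesis by blast
  qed
qed

lemma split_leaf_tside_old_edge:
  assumes T: "is_tree N TE" and l: "l \<in> tleaves N TE" and n: "n1 \<notin> N" "n2 \<notin> N" "n1 \<noteq> n2"
    and ab: "{a, b} \<in> TE"
  defines "N' \<equiv> insert n1 (insert n2 N)" and "TE' \<equiv> insert {n1, l} (insert {n2, l} TE)"
    and "S \<equiv> tside N TE a b"
  shows "tside N' TE' a b = (S - {l}) \<union> (if l \<in> S then {n1, n2} else {})"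
proof -
  define TEab where "TEab = TE - {{a, b}}"
  have sub: "\<forall>e\<in>TE. e \<subseteq> N" using T unfolding is_tree_def by auto
  have aN: "a \<in> N" using is_tree_edge_nodes[OF T ab] by auto
  have lN: "l \<in> N" using l unfolding tleaves_def by auto
  have rm: "TE' - {{a, b}} = insert {n1, l} (insert {n2, l} TEab)"
    using ab sub n unfolding TE'_def TEab_def by auto
  have R1: "(a, y) \<in> (tree_rel (insert {n1, l} (insert {n2, l} TEab)))\<^sup>* \<longleftrightarrow>
      (y \<noteq> n1 \<and> (a, y) \<in> (tree_rel (insert {n2, l} TEab))\<^sup>*) \<or>
      (y = n1 \<and> (a, l) \<in> (tree_rel (insert {n2, l} TEab))\<^sup>*)" for y
    using sub n aN lN
    by (intro rtrancl_tree_rel_insert_pendant) (auto simp: TEab_def)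
  have R2: "(a, y) \<in> (tree_rel (insert {n2, l} TEab))\<^sup>* \<longleftrightarrow>
      (y \<noteq> n2 \<and> (a, y) \<in> (tree_rel TEab)\<^sup>*) \<or> (y = n2 \<and> (a, l) \<in> (tree_rel TEab)\<^sup>*)" for y
    using sub n aN lN
    by (intro rtrancl_tree_rel_insert_pendant) (auto simp: TEab_def)
  have L': "tleaves N' TE' = insert n1 (insert n2 (tleaves N TE - {l}))"
    unfolding N'_def TE'_def using split_leaf_tleaves[OF T l n] .
  have "x \<in> tside N' TE' a b \<longleftrightarrow> x \<in> (S - {l}) \<union> (if l \<in> S then {n1, n2} else {})" for x
  proof (cases "x \<in> {n1, n2}")
    case True
    have "n1 \<notin> tleaves N TE" "n2 \<notin> tleaves N TE" using n unfolding tleaves_def by auto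
    with True show ?thesis
      unfolding tside_def rm L' S_def TEab_def[symmetric] using R1[of x] R2[of x] R2[of l] n l by auto
  next
    case False
    then show ?thesis
      unfolding tside_def rm L' S_def TEab_def[symmetric] using R1[of x] R2[of x] by auto
  qed
  then show ?thesis by blast
qed

text \<open>The sides that arise when each leaf of a decomposition of the \<pi>-image is expanded into
  a subtree over its \<pi>-fibre: preimages of old sides, sides inside one fibre, or complements
  of such.\<close>

definition fibred_cut :: "('e \<Rightarrow> 'd) \<Rightarrow> 'd set set \<Rightarrow> 'e set \<Rightarrow> 'e set \<Rightarrow> bool" where
  "fibred_cut \<pi> Xs U Y \<longleftrightarrow>
     (\<exists>X\<in>Xs. Y = {x\<in>U. \<pi> x \<in> X}) \<or> (\<exists>d. \<forall>x\<in>Y. \<pi> x = d) \<or> (\<exists>d. \<forall>x\<in>U - Y. \<pi> x = d)"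

lemma fibred_cut_insert_in:
  assumes "fibred_cut \<pi> Xs U Y" "u \<in> Y" "\<pi> e = \<pi> u"
  shows "fibred_cut \<pi> Xs (insert e U) (insert e Y)"
proof -
  from assms(1) consider (preimage) X where "X \<in> Xs" "Y = {x\<in>U. \<pi> x \<in> X}"
    | (fibre) d where "\<forall>x\<in>Y. \<pi> x = d" | (cofibre) d where "\<forall>x\<in>U - Y. \<pi> x = d"
    unfolding fibred_cut_def by blast
  then show ?thesis
  proof cases
    case preimage
    then have "insert e Y = {x\<in>insert e U. \<pi> x \<in> X}" using assms(2,3) by auto
    then show ?thesis using preimage unfolding fibred_cut_def by blast
  next
    case fibre
    then have "\<forall>x\<in>insert e Y. \<pi> x = d" using assms(2,3) by auto
    then show ?thesis unfolding fibred_cut_def by blast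
  next
    case cofibre
    then have "\<forall>x\<in>insert e U - insert e Y. \<pi> x = d" by auto
    then show ?thesis unfolding fibred_cut_def by blast
  qed
qed

lemma fibred_cut_insert_out:
  assumes "fibred_cut \<pi> Xs U Y" "u \<in> U - Y" "\<pi> e = \<pi> u"
  shows "fibred_cut \<pi> Xs (insert e U) Y"
proof -
  from assms(1) consider (preimage) X where "X \<in> Xs" "Y = {x\<in>U. \<pi> x \<in> X}"
    | (fibre) d where "\<forall>x\<in>Y. \<pi> x = d" | (cofibre) d where "\<forall>x\<in>U - Y. \<pi> x = d"
    unfolding fibred_cut_def by blast
  then show ?thesis
  proof cases
    case preimage
    then have "\<pi> e \<notin> X" using assms(2,3) by auto
    then have "Y = {x\<in>insert e U. \<pi> x \<in> X}" using preimage(2) by blast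
    then show ?thesis using preimage unfolding fibred_cut_def by blast
  next
    case fibre
    then show ?thesis unfolding fibred_cut_def by blast
  next
    case cofibre
    then have "\<forall>x\<in>insert e U - Y. \<pi> x = d" using assms(2,3) by auto
    then show ?thesis unfolding fibred_cut_def by blast
  qed
qed

lemma fibred_cut_small_side:
  assumes "S \<subseteq> {m} \<or> L - S \<subseteq> {m}"
  shows "fibred_cut \<pi> Xs (\<tau> ` L) (\<tau> ` S)"
  using assms
proof
  assume "S \<subseteq> {m}"
  then have "\<forall>x\<in>\<tau> ` S. \<pi> x = \<pi> (\<tau> m)" by auto
  then show ?thesis unfolding fibred_cut_def by blast
next
  assume "L - S \<subseteq> {m}"
  then have "\<forall>x\<in>\<tau> ` L - \<tau> ` S. \<pi> x = \<pi> (\<tau> m)" by auto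
  then show ?thesis unfolding fibred_cut_def by blast
qed

lemma split_leaf_fibred_cut:
  assumes T: "is_tree N TE" and l: "l \<in> tleaves N TE" and n: "n1 \<notin> N" "n2 \<notin> N" "n1 \<noteq> n2"
    and inj: "inj_on \<tau> (tleaves N TE)" and e: "e \<notin> \<tau> ` tleaves N TE" "\<pi> (\<tau> l) = \<pi> e"
    and cuts: "\<forall>a b. {a, b} \<in> TE \<longrightarrow> fibred_cut \<pi> Xs (\<tau> ` tleaves N TE) (\<tau> ` tside N TE a b)"
    and ab: "{a, b} \<in> insert {n1, l} (insert {n2, l} TE)"
  defines "N' \<equiv> insert n1 (insert n2 N)" and "TE' \<equiv> insert {n1, l} (insert {n2, l} TE)"
    and "\<tau>' \<equiv> \<tau>(n1 := \<tau> l, n2 := e)"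
  shows "fibred_cut \<pi> Xs (insert e (\<tau> ` tleaves N TE)) (\<tau>' ` tside N' TE' a b)"
proof -
  define L where "L = tleaves N TE"
  have lN: "l \<in> N" using l unfolding tleaves_def by auto
  have L': "tleaves N' TE' = insert n1 (insert n2 (L - {l}))"
    using split_leaf_tleaves[OF T l n] unfolding N'_def TE'_def L_def .
  have LN: "L - {l} \<subseteq> N" unfolding L_def tleaves_def by auto
  have U': "\<tau>' ` tleaves N' TE' = insert e (\<tau> ` L)"
    using l LN n unfolding L' \<tau>'_def L_def by auto
  consider "{a, b} = {n1, l}" | "{a, b} = {n2, l}" | "{a, b} \<in> TE"
    using ab by auto
  then show ?thesis
  proof cases
    case 1
    then show ?thesis using split_leaf_tside_new_edge[OF T lN n 1] fibred_cut_small_side U'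
      unfolding N'_def TE'_def L_def by metis
  next
    case 2
    have "\<exists>m. tside N' TE' a b \<subseteq> {m} \<or> tleaves N' TE' - tside N' TE' a b \<subseteq> {m}"
      using split_leaf_tside_new_edge[OF T lN n(2,1) _ 2] n
      unfolding N'_def TE'_def by (simp add: insert_commute)
    then show ?thesis using fibred_cut_small_side U' unfolding L_def by metis
  next
    case 3
    define S where "S = tside N TE a b"
    have side': "tside N' TE' a b = (S - {l}) \<union> (if l \<in> S then {n1, n2} else {})"
      using split_leaf_tside_old_edge[OF T l n 3] unfolding N'_def TE'_def S_def .
    have cut: "fibred_cut \<pi> Xs (\<tau> ` L) (\<tau> ` S)" using cuts 3 unfolding L_def S_def by blast
    have SL: "S \<subseteq> L" unfolding S_def L_def tside_def by auto
    then have S_old: "\<tau>' ` (S - {l}) = \<tau> ` (S - {l})" using LN n unfolding \<tau>'_def by auto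
    show ?thesis
    proof (cases "l \<in> S")
      case True
      then have "\<tau>' ` tside N' TE' a b = insert e (\<tau> ` S)"
        unfolding side' using S_old n by (auto simp: \<tau>'_def)
      then show ?thesis using fibred_cut_insert_in[OF cut _ e(2)[symmetric]] True
        unfolding L_def by auto
    next
      case False
      then have "\<tau>' ` tside N' TE' a b = \<tau> ` S" unfolding side' using S_old by auto
      moreover have "\<tau> l \<notin> \<tau> ` S" using False inj l SL unfolding L_def by (auto simp: inj_on_def)
      ultimately show ?thesis
        using fibred_cut_insert_out[OF cut _ e(2)[symmetric]] l unfolding L_def by auto
    qed
  qed
qed

text \<open>Each step replaces a leaf l, whose label has the same \<pi>-value as a still missing
  element e, by a cherry with leaves labelled \<open>\<tau> l\<close> and e.\<close>

lemma expand_decomposition: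
  assumes "finite F" "is_tree N TE" "\<forall>n\<in>N. tdeg TE n \<le> 3"
    and "inj_on \<tau> (tleaves N TE)" "\<tau> ` tleaves N TE \<subseteq> F" "\<pi> ` F \<subseteq> \<pi> ` \<tau> ` tleaves N TE"
    and "\<forall>a b. {a, b} \<in> TE \<longrightarrow> fibred_cut \<pi> Xs (\<tau> ` tleaves N TE) (\<tau> ` tside N TE a b)"
  shows "\<exists>N' TE' \<tau>'. is_tree N' TE' \<and> (\<forall>n\<in>N'. tdeg TE' n \<le> 3) \<and>
    bij_betw \<tau>' (tleaves N' TE') F \<and> (\<forall>a b. {a, b} \<in> TE' \<longrightarrow> fibred_cut \<pi> Xs F (\<tau>' ` tside N' TE' a b))"
  using assms(2-)
proof (induction "card (F - \<tau> ` tleaves N TE)" arbitrary: N TE \<tau> rule: less_induct)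
  case less
  note T = less.prems(1)
  define L where "L = tleaves N TE"
  show ?case
  proof (cases "\<tau> ` L = F")
    case True
    then show ?thesis using less.prems unfolding bij_betw_def L_def by blast
  next
    case False
    then obtain e where e: "e \<in> F" "e \<notin> \<tau> ` L" using less.prems(4) unfolding L_def by auto
    then obtain l where l: "l \<in> L" "\<pi> (\<tau> l) = \<pi> e" using less.prems(5) unfolding L_def by force
    have lN: "l \<in> N" using l unfolding L_def tleaves_def by auto
    define n1 where "n1 = Suc (Max N)"
    define n2 where "n2 = Suc n1"
    have finN: "finite N" using T unfolding is_tree_def by auto
    have n: "n1 \<notin> N" "n2 \<notin> N" "n1 \<noteq> n2"
      using Max_ge[OF finN, of n1] Max_ge[OF finN, of n2] unfolding n1_def n2_def by auto
    define N' where "N' = insert n1 (insert n2 N)"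
    define TE' where "TE' = insert {n1, l} (insert {n2, l} TE)"
    define \<tau>' where "\<tau>' = \<tau>(n1 := \<tau> l, n2 := e)"
    have L': "tleaves N' TE' = insert n1 (insert n2 (L - {l}))"
      using split_leaf_tleaves[OF T l(1)[unfolded L_def] n] unfolding N'_def TE'_def L_def .
    have LN: "L - {l} \<subseteq> N" unfolding L_def tleaves_def by auto
    have old: "\<tau>' ` (L - {l}) = \<tau> ` (L - {l})" using LN n unfolding \<tau>'_def by auto
    have U': "\<tau>' ` tleaves N' TE' = insert e (\<tau> ` L)"
      using old l(1) n unfolding L' \<tau>'_def by auto
    have inj': "inj_on \<tau>' (tleaves N' TE')"
    proof -
      have injL: "inj_on \<tau> L" using less.prems(3) unfolding L_def .
      then have "inj_on \<tau>' (L - {l})" using LN n unfolding \<tau>'_def by (auto simp: inj_on_def)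
      moreover have "\<tau> l \<notin> \<tau> ` (L - {l})" using injL l(1) by (auto simp: inj_on_def)
      moreover have "n1 \<notin> L - {l}" "n2 \<notin> L - {l}" using LN n by auto
      moreover have "\<tau>' n1 = \<tau> l" "\<tau>' n2 = e" using n unfolding \<tau>'_def by auto
      moreover have "e \<notin> \<tau> ` L" "\<tau> l \<in> \<tau> ` L" using e(2) l(1) by auto
      ultimately show ?thesis unfolding L' using old n(3) by (auto simp: inj_on_insert)
    qed
    have "card (F - \<tau>' ` tleaves N' TE') < card (F - \<tau> ` tleaves N TE)"
      unfolding U' L_def using e less.prems(4) \<open>finite F\<close>
      by (metis Diff_insert Diff_iff card_Diff1_less finite_Diff L_def)
    moreover have "is_tree N' TE'" "\<forall>n\<in>N'. tdeg TE' n \<le> 3"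
      using split_leaf_is_tree[OF T lN n] split_leaf_tdeg_le_3[OF T less.prems(2) l(1)[unfolded L_def] n]
      unfolding N'_def TE'_def by auto
    moreover have "\<forall>a b. {a, b} \<in> TE' \<longrightarrow> fibred_cut \<pi> Xs (\<tau>' ` tleaves N' TE') (\<tau>' ` tside N' TE' a b)"
      using split_leaf_fibred_cut[OF T _ n less.prems(3) _ l(2) less.prems(6)] l(1) e(2) U'
      unfolding N'_def TE'_def \<tau>'_def L_def by auto
    moreover have "\<tau>' ` tleaves N' TE' \<subseteq> F" "\<pi> ` F \<subseteq> \<pi> ` \<tau>' ` tleaves N' TE'"
      using U' e less.prems(4,5) unfolding L_def by auto
    ultimately show ?thesis using less.hyps inj' by blast
  qed
qed

lemma Inf_nat_eq_if_mutually_bounded: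
  fixes A B :: "nat set"
  assumes "\<And>b. b \<in> B \<Longrightarrow> \<exists>a\<in>A. a \<le> b" "\<And>a. a \<in> A \<Longrightarrow> \<exists>b\<in>B. b \<le> a"
  shows "Inf A = Inf B"
proof (cases "A = {}")
  case True
  then have "B = {}" using assms(1) by blast
  then show ?thesis using True by simp
next
  case False
  then have B: "B \<noteq> {}" using assms(2) by blast
  obtain a where "a \<in> A" "a \<le> Inf B" using assms(1) Inf_nat_def1[OF B] by blast
  then have "Inf A \<le> Inf B" using cInf_lower[of a A] by simp
  moreover obtain b where "b \<in> B" "b \<le> Inf A" using assms(2) Inf_nat_def1[OF False] by blast
  then have "Inf B \<le> Inf A" using cInf_lower[of b B] by simp
  ultimately show ?thesis by simp
qed

definition branch_decomposition :: "nat set \<Rightarrow> nat set set \<Rightarrow> (nat \<Rightarrow> 'e) \<Rightarrow> 'e set \<Rightarrow> bool" where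
  "branch_decomposition N TE \<tau> F \<longleftrightarrow>
     is_tree N TE \<and> (\<forall>n\<in>N. tdeg TE n \<le> 3) \<and> bij_betw \<tau> (tleaves N TE) F"

lemma gen_branch_width_eq_Inf:
  "gen_branch_width F ord =
     Inf {decomp_width ord N TE \<tau> | N TE \<tau>. branch_decomposition N TE \<tau> F}"
  unfolding gen_branch_width_def branch_decomposition_def by (rule arg_cong[where f = Inf]) blast

lemma gen_branch_width_eqI:
  assumes "\<And>N TE \<sigma>. branch_decomposition N TE \<sigma> F \<Longrightarrow>
      \<exists>N' TE' \<tau>. branch_decomposition N' TE' \<tau> F' \<and> decomp_width ord' N' TE' \<tau> \<le> decomp_width ord N TE \<sigma>"
    and "\<And>N TE \<tau>. branch_decomposition N TE \<tau> F' \<Longrightarrow>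
      \<exists>N' TE' \<sigma>. branch_decomposition N' TE' \<sigma> F \<and> decomp_width ord N' TE' \<sigma> \<le> decomp_width ord' N TE \<tau>"
  shows "gen_branch_width F ord = gen_branch_width F' ord'"
  unfolding gen_branch_width_eq_Inf
proof (rule Inf_nat_eq_if_mutually_bounded)
  fix w assume "w \<in> {decomp_width ord' N TE \<tau> | N TE \<tau>. branch_decomposition N TE \<tau> F'}"
  then obtain N TE \<tau> where "branch_decomposition N TE \<tau> F'" "w = decomp_width ord' N TE \<tau>"
    by blast
  then obtain N' TE' \<sigma> where "branch_decomposition N' TE' \<sigma> F" "decomp_width ord N' TE' \<sigma> \<le> w"
    using assms(2) by blast
  then show "\<exists>v\<in>{decomp_width ord N TE \<sigma> | N TE \<sigma>. branch_decomposition N TE \<sigma> F}. v \<le> w"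
    by blast
next
  fix w assume "w \<in> {decomp_width ord N TE \<sigma> | N TE \<sigma>. branch_decomposition N TE \<sigma> F}"
  then obtain N TE \<sigma> where "branch_decomposition N TE \<sigma> F" "w = decomp_width ord N TE \<sigma>"
    by blast
  then obtain N' TE' \<tau> where "branch_decomposition N' TE' \<tau> F'" "decomp_width ord' N' TE' \<tau> \<le> w"
    using assms(1) by blast
  then show "\<exists>v\<in>{decomp_width ord' N TE \<tau> | N TE \<tau>. branch_decomposition N TE \<tau> F'}. v \<le> w"
    by blast
qed

lemma ug_order_complement: "Y \<subseteq> F \<Longrightarrow> ug_order F ends (F - Y) = ug_order F ends Y"
  unfolding ug_order_def by (simp add: Int_commute double_diff)

lemma ug_order_empty: "ug_order F ends {} = 0"
  unfolding ug_order_def by simp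

lemma dbw_order_full: "dbw_order E E = 0"
  unfolding dbw_order_def SV_def by simp

lemma card_incident_edges:
  assumes "wf_digraph V E"
  shows "card {e \<in> E. v \<in> u_ends e} = vdegree E v"
proof -
  have fin: "finite E" using assms unfolding wf_digraph_def by (meson finite_SigmaI finite_subset)
  have "{e \<in> E. v \<in> u_ends e} = (\<lambda>u. (u, v)) ` in_nbrs E v \<union> (\<lambda>z. (v, z)) ` out_nbrs E v"
    unfolding in_nbrs_def out_nbrs_def u_ends_def by auto
  moreover have "in_nbrs E v \<subseteq> fst ` E" "out_nbrs E v \<subseteq> snd ` E"
    unfolding in_nbrs_def out_nbrs_def by force+
  then have "finite (in_nbrs E v)" "finite (out_nbrs E v)"
    using fin by (auto intro: finite_subset)
  moreover have "(\<lambda>u. (u, v)) ` in_nbrs E v \<inter> (\<lambda>z. (v, z)) ` out_nbrs E v = {}"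
    using assms unfolding wf_digraph_def in_nbrs_def out_nbrs_def by auto
  ultimately show ?thesis
    unfolding vdegree_def by (simp add: card_Un_disjoint card_image inj_on_def)
qed

definition merges_only_terminals :: "'a set \<Rightarrow> ('a \<times> 'a) set \<Rightarrow> ('a \<Rightarrow> 'b) \<Rightarrow> bool" where
  "merges_only_terminals V E \<phi> \<longleftrightarrow> (\<forall>v\<in>V. \<forall>w\<in>V. \<phi> v = \<phi> w \<longrightarrow> v = w \<or>
      (is_source V E v \<and> is_source V E w) \<or> (is_sink V E v \<and> is_sink V E w))"

lemma merges_only_terminals_inj: "inj_on \<phi> V \<Longrightarrow> merges_only_terminals V E \<phi>"
  unfolding merges_only_terminals_def inj_on_def by blast

lemma is_source_if_image_source:
  assumes "v \<in> V" "E' = (\<lambda>(a, b). (\<phi> a, \<phi> b)) ` E" "is_source V' E' (\<phi> v)"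
  shows "is_source V E v"
  using assms unfolding is_source_def in_nbrs_def by force

lemma is_sink_if_image_sink:
  assumes "v \<in> V" "E' = (\<lambda>(a, b). (\<phi> a, \<phi> b)) ` E" "is_sink V' E' (\<phi> v)"
  shows "is_sink V E v"
  using assms unfolding is_sink_def out_nbrs_def by force

lemma merges_only_terminals_comp:
  assumes \<phi>: "merges_only_terminals V E \<phi>" "\<phi> ` V \<subseteq> V'" "E' = (\<lambda>(a, b). (\<phi> a, \<phi> b)) ` E"
    and f: "merges_only_terminals V' E' f"
  shows "merges_only_terminals V E (f \<circ> \<phi>)"
  unfolding merges_only_terminals_def
proof (intro ballI impI)
  fix v w assume vw: "v \<in> V" "w \<in> V" and eq: "(f \<circ> \<phi>) v = (f \<circ> \<phi>) w"
  then have "\<phi> v = \<phi> w \<or> (is_source V' E' (\<phi> v) \<and> is_source V' E' (\<phi> w)) \<or>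
      (is_sink V' E' (\<phi> v) \<and> is_sink V' E' (\<phi> w))"
    using f \<phi>(2) unfolding merges_only_terminals_def by auto
  then show "v = w \<or> (is_source V E v \<and> is_source V E w) \<or> (is_sink V E v \<and> is_sink V E w)"
    using \<phi>(1) vw is_source_if_image_source[OF _ \<phi>(3)] is_sink_if_image_sink[OF _ \<phi>(3)]
    unfolding merges_only_terminals_def by metis
qed

text \<open>Identifying two sources (or two sinks) x, y into g is the image under the map sending
  x, y to g; the only edges the map could collapse would join x and y, and there are none.\<close>

lemma ident_step_edges_image:
  fixes x y g :: 'a
  assumes "\<forall>a b. (a, b) \<in> E \<longrightarrow> a \<notin> {x, y} \<or> b \<notin> {x, y}"
  defines "f \<equiv> \<lambda>c. if c \<in> {x, y} then g else c"
  shows "{(a, b). (a, b) \<in> E \<and> a \<notin> {x, y} \<and> b \<notin> {x, y}}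
      \<union> {(a, g) | a. a \<in> in_nbrs E x \<union> in_nbrs E y}
      \<union> {(g, b) | b. b \<in> out_nbrs E x \<union> out_nbrs E y} = (\<lambda>(a, b). (f a, f b)) ` E"
proof (intro equalityI subsetI)
  fix p assume "p \<in> {(a, b). (a, b) \<in> E \<and> a \<notin> {x, y} \<and> b \<notin> {x, y}}
      \<union> {(a, g) | a. a \<in> in_nbrs E x \<union> in_nbrs E y}
      \<union> {(g, b) | b. b \<in> out_nbrs E x \<union> out_nbrs E y}"
  then consider (kept) a b where "p = (a, b)" "(a, b) \<in> E" "a \<notin> {x, y}" "b \<notin> {x, y}"
    | (head) a z where "p = (a, g)" "(a, z) \<in> E" "z \<in> {x, y}"
    | (tail) z b where "p = (g, b)" "(z, b) \<in> E" "z \<in> {x, y}"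
    unfolding in_nbrs_def out_nbrs_def by blast
  then show "p \<in> (\<lambda>(a, b). (f a, f b)) ` E"
  proof cases
    case kept
    then show ?thesis unfolding f_def by force
  next
    case head
    then have "p = (f a, f z)" using assms(1) unfolding f_def by auto
    then show ?thesis using head(2) by force
  next
    case tail
    then have "p = (f z, f b)" using assms(1) unfolding f_def by auto
    then show ?thesis using tail(2) by force
  qed
next
  fix p assume "p \<in> (\<lambda>(a, b). (f a, f b)) ` E"
  then obtain a b where "(a, b) \<in> E" "p = (f a, f b)" by auto
  then show "p \<in> {(a, b). (a, b) \<in> E \<and> a \<notin> {x, y} \<and> b \<notin> {x, y}}
      \<union> {(a, g) | a. a \<in> in_nbrs E x \<union> in_nbrs E y}
      \<union> {(g, b) | b. b \<in> out_nbrs E x \<union> out_nbrs E y}"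
    using assms(1) unfolding f_def in_nbrs_def out_nbrs_def by auto
qed

lemma ident_step_map:
  assumes "ident_step G G'"
  obtains f where "f ` fst G \<subseteq> fst G'" "snd G' = (\<lambda>(a, b). (f a, f b)) ` snd G"
    "merges_only_terminals (fst G) (snd G) f"
proof -
  obtain x y g where xy: "x \<noteq> y"
      "(is_source (fst G) (snd G) x \<and> is_source (fst G) (snd G) y) \<or>
       (is_sink (fst G) (snd G) x \<and> is_sink (fst G) (snd G) y)"
    and g: "g \<notin> fst G - {x, y}" and V': "fst G' = insert g (fst G - {x, y})"
    and E': "snd G' = {(a, b). (a, b) \<in> snd G \<and> a \<notin> {x, y} \<and> b \<notin> {x, y}}
               \<union> {(a, g) | a. a \<in> in_nbrs (snd G) x \<union> in_nbrs (snd G) y}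
               \<union> {(g, b) | b. b \<in> out_nbrs (snd G) x \<union> out_nbrs (snd G) y}"
    using assms unfolding ident_step_def by (elim exE conjE) (rule that; assumption)
  define f where "f c = (if c \<in> {x, y} then g else c)" for c
  have "\<forall>a b. (a, b) \<in> snd G \<longrightarrow> a \<notin> {x, y} \<or> b \<notin> {x, y}"
    using xy(2) unfolding is_source_def is_sink_def in_nbrs_def out_nbrs_def by auto
  then have "snd G' = (\<lambda>(a, b). (f a, f b)) ` snd G"
    unfolding E' f_def by (rule ident_step_edges_image)
  moreover have "f ` fst G \<subseteq> fst G'" unfolding V' f_def by auto
  moreover have "merges_only_terminals (fst G) (snd G) f"
    unfolding merges_only_terminals_def
  proof (intro ballI impI)
    fix v w assume "v \<in> fst G" "w \<in> fst G" "f v = f w"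
    then have "v = w \<or> (v \<in> {x, y} \<and> w \<in> {x, y})"
      using g unfolding f_def by (auto split: if_splits)
    then show "v = w \<or> (is_source (fst G) (snd G) v \<and> is_source (fst G) (snd G) w) \<or>
        (is_sink (fst G) (snd G) v \<and> is_sink (fst G) (snd G) w)"
      using xy(2) by blast
  qed
  ultimately show ?thesis using that by blast
qed

lemma ident_steps_map:
  assumes "ident_step\<^sup>*\<^sup>* (V, E) G"
  shows "\<exists>\<phi>. \<phi> ` V \<subseteq> fst G \<and> snd G = (\<lambda>(a, b). (\<phi> a, \<phi> b)) ` E \<and> merges_only_terminals V E \<phi>"
  using assms
proof (induction rule: rtranclp_induct)
  case base
  show ?case by (intro exI[of _ id]) (auto intro: merges_only_terminals_inj)
next
  case (step G G')
  obtain \<phi> where \<phi>: "\<phi> ` V \<subseteq> fst G" "snd G = (\<lambda>(a, b). (\<phi> a, \<phi> b)) ` E"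
      "merges_only_terminals V E \<phi>"
    using step.IH by blast
  obtain f where f: "f ` fst G \<subseteq> fst G'" "snd G' = (\<lambda>(a, b). (f a, f b)) ` snd G"
      "merges_only_terminals (fst G) (snd G) f"
    using ident_step_map[OF step.hyps(2)] .
  have "(f \<circ> \<phi>) ` V \<subseteq> fst G'" using \<phi>(1) f(1) by auto
  moreover have "snd G' = (\<lambda>(a, b). ((f \<circ> \<phi>) a, (f \<circ> \<phi>) b)) ` E"
    unfolding f(2) \<phi>(2) by auto
  moreover have "merges_only_terminals V E (f \<circ> \<phi>)"
    using merges_only_terminals_comp[OF \<phi>(3,1,2) f(3)] .
  ultimately show ?case by blast
qed

lemma source_sink_split_map:
  assumes "source_sink_split VH EH VD ED"
  obtains \<phi> where "ED = (\<lambda>(a, b). (\<phi> a, \<phi> b)) ` EH" "merges_only_terminals VH EH \<phi>"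
proof -
  obtain V' E' where r: "ident_step\<^sup>*\<^sup>* (VH, EH) (V', E')" and iso: "digraph_iso V' E' VD ED"
    using assms unfolding source_sink_split_def by blast
  obtain \<phi> where \<phi>: "\<phi> ` VH \<subseteq> V'" "E' = (\<lambda>(a, b). (\<phi> a, \<phi> b)) ` EH"
      "merges_only_terminals VH EH \<phi>"
    using ident_steps_map[OF r] by auto
  obtain f where f: "bij_betw f V' VD" "ED = (\<lambda>(a, b). (f a, f b)) ` E'"
    using iso unfolding digraph_iso_def by blast
  have "ED = (\<lambda>(a, b). ((f \<circ> \<phi>) a, (f \<circ> \<phi>) b)) ` EH"
    unfolding f(2) \<phi>(2) by auto
  moreover have "merges_only_terminals VH EH (f \<circ> \<phi>)"
    using merges_only_terminals_comp[OF \<phi>(3,1,2)] merges_only_terminals_inj f(1)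
    unfolding bij_betw_def by blast
  ultimately show ?thesis using that by blast
qed

locale split_map =
  fixes VH :: "'a set" and EH :: "('a \<times> 'a) set" and VD :: "'b set" and ED :: "('b \<times> 'b) set"
    and \<phi> :: "'a \<Rightarrow> 'b"
  assumes wf_H: "wf_digraph VH EH" and wf_D: "wf_digraph VD ED"
    and terminal_degree: "\<And>x. is_source VH EH x \<or> is_sink VH EH x \<Longrightarrow> vdegree EH x = 1"
    and edges_image: "ED = (\<lambda>(a, b). (\<phi> a, \<phi> b)) ` EH"
    and merges: "merges_only_terminals VH EH \<phi>"
begin

definition edge_map :: "'a \<times> 'a \<Rightarrow> 'b \<times> 'b" where
  "edge_map e = (\<phi> (fst e), \<phi> (snd e))"

lemma ED_eq_image: "ED = edge_map ` EH"
  unfolding edges_image edge_map_def by (auto simp: case_prod_beta)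

lemma edge_map_in: "e \<in> EH \<Longrightarrow> edge_map e \<in> ED"
  using ED_eq_image by auto

lemma EH_subset: "EH \<subseteq> VH \<times> VH"
  using wf_H unfolding wf_digraph_def by auto

lemma finite_EH: "finite EH"
  using wf_H unfolding wf_digraph_def by (meson finite_SigmaI finite_subset)

lemma u_ends_subset: "e \<in> EH \<Longrightarrow> u_ends e \<subseteq> VH"
  using EH_subset unfolding u_ends_def by (cases e) auto

definition inner_vertex :: "'a \<Rightarrow> bool" where
  "inner_vertex v \<longleftrightarrow> v \<in> VH \<and> \<not> is_source VH EH v \<and> \<not> is_sink VH EH v"

lemma inner_vertexE:
  assumes "inner_vertex v"
  obtains u z where "(u, v) \<in> EH" "(v, z) \<in> EH"
  using assms unfolding inner_vertex_def is_source_def is_sink_def in_nbrs_def out_nbrs_def by auto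

lemma shared_vertex_inner:
  assumes e: "e1 \<in> EH" "e2 \<in> EH" "e1 \<noteq> e2" and v: "v \<in> u_ends e1" "v \<in> u_ends e2"
  shows "inner_vertex v"
proof -
  have "card {e1, e2} \<le> card {e \<in> EH. v \<in> u_ends e}"
    using finite_EH e v by (intro card_mono) auto
  then have "vdegree EH v \<noteq> 1" using card_incident_edges[OF wf_H] e(3) by simp
  then show ?thesis
    unfolding inner_vertex_def using terminal_degree u_ends_subset e(1) v(1) by blast
qed

lemma inner_vertex_inj:
  assumes "inner_vertex v" "w \<in> VH" "\<phi> w = \<phi> v"
  shows "w = v"
  using assms merges unfolding inner_vertex_def merges_only_terminals_def by metis

text \<open>The head of one edge and the tail of another can only be merged if they coincide,
  since the first is no source and the second no sink.\<close>

lemma edge_map_meet: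
  assumes "e1 \<in> EH" "e2 \<in> EH" "\<phi> (snd e2) = \<phi> (fst e1)"
  shows "snd e2 = fst e1"
proof -
  have "snd e2 \<in> VH" "fst e1 \<in> VH" using assms EH_subset by (auto simp: mem_Times_iff)
  moreover have "\<not> is_source VH EH (snd e2)" "\<not> is_sink VH EH (fst e1)"
    using assms(1,2) unfolding is_source_def in_nbrs_def is_sink_def out_nbrs_def
    by (cases e2, cases e1, auto)+
  ultimately show ?thesis using merges assms(3) unfolding merges_only_terminals_def by metis
qed

definition boundary :: "('a \<times> 'a) set \<Rightarrow> 'a set" where
  "boundary Y = \<Union> (u_ends ` Y) \<inter> \<Union> (u_ends ` (EH - Y))"

lemma ug_order_eq_card_boundary: "ug_order EH u_ends Y = card (boundary Y)"
  unfolding ug_order_def boundary_def ..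

lemma finite_boundary: "finite (boundary Y)"
proof -
  have "boundary Y \<subseteq> VH" using u_ends_subset unfolding boundary_def by blast
  then show ?thesis using wf_H unfolding wf_digraph_def by (auto intro: finite_subset)
qed

lemma boundaryE:
  assumes "v \<in> boundary Y" "Y \<subseteq> EH"
  obtains e1 e2 where "e1 \<in> Y" "e2 \<in> EH - Y" "v \<in> u_ends e1" "v \<in> u_ends e2" "inner_vertex v"
proof -
  obtain e1 e2 where e: "e1 \<in> Y" "e2 \<in> EH - Y" "v \<in> u_ends e1" "v \<in> u_ends e2"
    using assms(1) unfolding boundary_def by auto
  moreover have "inner_vertex v"
    using e assms(2) by (intro shared_vertex_inner[of e1 e2]) auto
  ultimately show ?thesis using that by blast
qed

text \<open>At a boundary vertex some in-edge and some out-edge lie on different sides; otherwise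
  all edges at the vertex, which are linked through any fixed in- and out-edge, would lie on
  one side.\<close>

lemma boundary_in_out_edges:
  assumes v: "v \<in> boundary Y" and Y: "Y \<subseteq> EH"
  shows "\<exists>ei eo. ei \<in> EH \<and> eo \<in> EH \<and> snd ei = v \<and> fst eo = v \<and> (ei \<in> Y \<longleftrightarrow> eo \<notin> Y)"
proof (rule ccontr)
  assume "\<not> ?thesis"
  then have same: "ei \<in> EH \<Longrightarrow> eo \<in> EH \<Longrightarrow> snd ei = v \<Longrightarrow> fst eo = v \<Longrightarrow> ei \<in> Y \<longleftrightarrow> eo \<in> Y" for ei eo
    by blast
  obtain e1 e2 where e: "e1 \<in> Y" "e2 \<in> EH - Y" "v \<in> u_ends e1" "v \<in> u_ends e2" "inner_vertex v"
    using boundaryE[OF v Y] .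
  obtain u z where u: "(u, v) \<in> EH" and z: "(v, z) \<in> EH" using inner_vertexE[OF e(5)] .
  have "e \<in> Y \<longleftrightarrow> (v, z) \<in> Y" if "e \<in> EH" "v \<in> u_ends e" for e
  proof -
    have "fst e = v \<or> snd e = v" using that(2) unfolding u_ends_def by auto
    then show ?thesis using same[OF u that(1)] same[OF u z] same[OF that(1) z] by auto
  qed
  then show False using e Y by blast
qed

lemma finite_SV_union: "finite (SV ED X \<union> SV ED (ED - X))"
proof -
  have "SV ED X \<union> SV ED (ED - X) \<subseteq> VD"
    using wf_D unfolding wf_digraph_def SV_def by auto
  then show ?thesis using wf_D unfolding wf_digraph_def by (auto intro: finite_subset)
qed

lemma ug_order_le_dbw_order_if_image_subset:
  assumes "Y \<subseteq> EH" "\<phi> ` boundary Y \<subseteq> SV ED X \<union> SV ED (ED - X)"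
  shows "ug_order EH u_ends Y \<le> dbw_order ED X"
proof -
  have "inj_on \<phi> (boundary Y)"
  proof (rule inj_onI)
    fix v w assume "v \<in> boundary Y" "w \<in> boundary Y" "\<phi> v = \<phi> w"
    then show "v = w"
      using boundaryE[OF _ assms(1)] inner_vertex_inj unfolding inner_vertex_def by metis
  qed
  then have "card (boundary Y) = card (\<phi> ` boundary Y)" by (simp add: card_image)
  also have "\<dots> \<le> card (SV ED X \<union> SV ED (ED - X))"
    using assms(2) finite_SV_union by (rule card_mono[rotated])
  finally show ?thesis unfolding dbw_order_def ug_order_eq_card_boundary .
qed

lemma ug_order_le_dbw_order_preimage:
  assumes Y: "Y \<subseteq> EH" and pre: "\<forall>e\<in>EH. e \<in> Y \<longleftrightarrow> edge_map e \<in> X"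
  shows "ug_order EH u_ends Y \<le> dbw_order ED X"
proof (rule ug_order_le_dbw_order_if_image_subset[OF Y], rule image_subsetI)
  fix v assume "v \<in> boundary Y"
  then obtain ei eo where io: "ei \<in> EH" "eo \<in> EH" "snd ei = v" "fst eo = v" "ei \<in> Y \<longleftrightarrow> eo \<notin> Y"
    using boundary_in_out_edges Y by blast
  then have "edge_map ei = (\<phi> (fst ei), \<phi> v)" "edge_map eo = (\<phi> v, \<phi> (snd eo))"
    unfolding edge_map_def by auto
  then show "\<phi> v \<in> SV ED X \<union> SV ED (ED - X)"
    using io pre edge_map_in[of ei] edge_map_in[of eo] unfolding SV_def by (cases "ei \<in> Y") force+
qed

lemma ug_order_le_dbw_order_fibre:
  assumes S: "S \<subseteq> EH" and fibre: "\<forall>e\<in>S. edge_map e = d"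
  shows "ug_order EH u_ends S \<le> dbw_order ED {d}"
proof (rule ug_order_le_dbw_order_if_image_subset[OF S], rule image_subsetI)
  fix v assume "v \<in> boundary S"
  then obtain e where e: "e \<in> S" "v \<in> u_ends e" "inner_vertex v"
    using boundaryE S by metis
  have "edge_map e = d" using fibre e(1) by auto
  then have d: "d = (\<phi> (fst e), \<phi> (snd e))" "d \<in> ED"
    using edge_map_in[of e] S e(1) unfolding edge_map_def by auto
  then have nl: "\<phi> (fst e) \<noteq> \<phi> (snd e)" using wf_D unfolding wf_digraph_def by auto
  obtain u z where u: "(u, v) \<in> EH" and z: "(v, z) \<in> EH" using inner_vertexE[OF e(3)] .
  have "(\<phi> u, \<phi> v) \<in> ED" "(\<phi> v, \<phi> z) \<in> ED"
    using edge_map_in[OF u] edge_map_in[OF z] unfolding edge_map_def by auto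
  moreover have "fst e = v \<or> snd e = v" using e(2) unfolding u_ends_def by auto
  ultimately show "\<phi> v \<in> SV ED {d} \<union> SV ED (ED - {d})"
    using d nl unfolding SV_def by auto
qed

lemma dbw_order_le_ug_order:
  assumes Y: "Y \<subseteq> EH" and X: "X \<subseteq> edge_map ` Y" "ED - X \<subseteq> edge_map ` (EH - Y)"
  shows "dbw_order ED X \<le> ug_order EH u_ends Y"
proof -
  have meet: "v \<in> \<phi> ` boundary Y"
    if "e1 \<in> EH" "e2 \<in> EH" "edge_map e2 = (x, v)" "edge_map e1 = (v, z)" "e1 \<in> Y \<longleftrightarrow> e2 \<notin> Y"
    for x v z e1 e2
  proof -
    have "snd e2 = fst e1" using edge_map_meet that(1-4) unfolding edge_map_def by auto
    then have "fst e1 \<in> u_ends e1" "fst e1 \<in> u_ends e2" unfolding u_ends_def by auto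
    then have "fst e1 \<in> boundary Y"
      using that(1,2,5) unfolding boundary_def by (cases "e1 \<in> Y") blast+
    moreover have "\<phi> (fst e1) = v" using that(4) unfolding edge_map_def by auto
    ultimately show ?thesis by blast
  qed
  have XED: "X \<subseteq> ED" using X(1) Y unfolding ED_eq_image by auto
  have lift: "\<exists>e\<in>EH. edge_map e = d \<and> (e \<in> Y \<longleftrightarrow> d \<in> X)" if dED: "d \<in> ED" for d
  proof (cases "d \<in> X")
    case True
    then obtain e where "e \<in> Y" "edge_map e = d" using X(1) by blast
    then show ?thesis using Y True by blast
  next
    case False
    then obtain e where "e \<in> EH - Y" "edge_map e = d" using X(2) dED by blast
    then show ?thesis using False by blast
  qed
  have "SV ED X \<union> SV ED (ED - X) \<subseteq> \<phi> ` boundary Y"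
  proof
    fix v assume "v \<in> SV ED X \<union> SV ED (ED - X)"
    then obtain x z where xz: "(x, v) \<in> ED" "(v, z) \<in> ED" "(x, v) \<in> X \<longleftrightarrow> (v, z) \<notin> X"
      unfolding SV_def using XED by auto
    obtain e1 e2 where "e2 \<in> EH" "edge_map e2 = (x, v)" "e2 \<in> Y \<longleftrightarrow> (x, v) \<in> X"
        "e1 \<in> EH" "edge_map e1 = (v, z)" "e1 \<in> Y \<longleftrightarrow> (v, z) \<in> X"
      using lift[OF xz(1)] lift[OF xz(2)] by blast
    then show "v \<in> \<phi> ` boundary Y" using meet xz(3) by blast
  qed
  then have "card (SV ED X \<union> SV ED (ED - X)) \<le> card (\<phi> ` boundary Y)"
    using finite_boundary by (intro card_mono) auto
  also have "\<dots> \<le> card (boundary Y)" using card_image_le finite_boundary by blast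
  finally show ?thesis unfolding dbw_order_def ug_order_eq_card_boundary .
qed

definition rep :: "'b \<times> 'b \<Rightarrow> 'a \<times> 'a" where
  "rep d = (SOME e. e \<in> EH \<and> edge_map e = d)"

lemma rep: "d \<in> ED \<Longrightarrow> rep d \<in> EH \<and> edge_map (rep d) = d"
  unfolding rep_def ED_eq_image by (rule someI_ex) blast

lemma inj_on_rep: "inj_on rep ED"
  using rep by (metis inj_onI)

lemma bij_betw_edge_map_rep: "bij_betw edge_map (rep ` ED) ED"
proof -
  have "edge_map ` rep ` ED = ED" using rep by (force simp: image_image)
  moreover have "inj_on edge_map (rep ` ED)" using rep by (auto simp: inj_on_def)
  ultimately show ?thesis unfolding bij_betw_def by blast
qed

lemma dbw_order_singleton_le:
  assumes "branch_decomposition N TE \<sigma> ED" "d \<in> ED"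
  shows "dbw_order ED {d} \<le> decomp_width (dbw_order ED) N TE \<sigma>"
  using assms dbw_order_full unfolding branch_decomposition_def
  by (intro order_singleton_le_decomp_width) auto

lemma ug_order_fibred_cut_le:
  assumes Y: "Y \<subseteq> EH" and cut: "fibred_cut edge_map Xs EH Y"
    and Xs: "\<forall>X\<in>Xs. dbw_order ED X \<le> w" and singletons: "\<forall>d\<in>ED. dbw_order ED {d} \<le> w"
  shows "ug_order EH u_ends Y \<le> w"
proof -
  have fibre_le: "ug_order EH u_ends S \<le> w" if "S \<subseteq> EH" "\<forall>e\<in>S. edge_map e = d" for S d
  proof (cases "S = {}")
    case True
    then show ?thesis by (simp add: ug_order_empty)
  next
    case False
    then obtain e where "e \<in> S" by blast
    then have "d \<in> ED" using that edge_map_in[of e] by auto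
    then have "dbw_order ED {d} \<le> w" using singletons by blast
    then show ?thesis using ug_order_le_dbw_order_fibre[OF that] by linarith
  qed
  from cut consider (preimage) X where "X \<in> Xs" "Y = {e\<in>EH. edge_map e \<in> X}"
    | (fibre) d where "\<forall>e\<in>Y. edge_map e = d" | (cofibre) d where "\<forall>e\<in>EH - Y. edge_map e = d"
    unfolding fibred_cut_def by blast
  then show ?thesis
  proof cases
    case preimage
    then have "ug_order EH u_ends Y \<le> dbw_order ED X"
      using ug_order_le_dbw_order_preimage[OF Y, of X] by blast
    then show ?thesis using Xs preimage(1) by (meson le_trans)
  next
    case fibre
    then show ?thesis using fibre_le[OF Y] by blast
  next
    case cofibre
    then show ?thesis using fibre_le[of "EH - Y" d] ug_order_complement[OF Y, of u_ends] by simp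
  qed
qed

text \<open>Relabel each leaf by a representative of its edge of D, then expand it to the whole
  fibre; every new side is a preimage of an old side or lies on one side of a single fibre.\<close>

lemma decomposition_lift:
  assumes dec: "branch_decomposition N TE \<sigma> ED"
  shows "\<exists>N' TE' \<tau>. branch_decomposition N' TE' \<tau> EH \<and>
    decomp_width (ug_order EH u_ends) N' TE' \<tau> \<le> decomp_width (dbw_order ED) N TE \<sigma>"
proof -
  have T: "is_tree N TE" "\<forall>n\<in>N. tdeg TE n \<le> 3" and bij: "bij_betw \<sigma> (tleaves N TE) ED"
    using dec unfolding branch_decomposition_def by auto
  define w where "w = decomp_width (dbw_order ED) N TE \<sigma>"
  define L where "L = tleaves N TE"
  define Xs where "Xs = {\<sigma> ` tside N TE a b | a b. {a, b} \<in> TE}"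
  have imL: "\<sigma> ` L = ED" using bij unfolding bij_betw_def L_def by auto
  have im0: "(rep \<circ> \<sigma>) ` L = rep ` ED" unfolding image_comp[symmetric] imL ..
  have "inj_on (rep \<circ> \<sigma>) L"
    using bij inj_on_rep unfolding bij_betw_def L_def by (auto intro: comp_inj_on)
  moreover have "(rep \<circ> \<sigma>) ` L \<subseteq> EH" unfolding im0 using rep by auto
  moreover have "edge_map ` EH \<subseteq> edge_map ` (rep \<circ> \<sigma>) ` L"
    unfolding im0 using bij_betw_edge_map_rep ED_eq_image unfolding bij_betw_def by simp
  moreover have "fibred_cut edge_map Xs ((rep \<circ> \<sigma>) ` L) ((rep \<circ> \<sigma>) ` tside N TE a b)"
    if ab: "{a, b} \<in> TE" for a b
  proof -
    define X where "X = \<sigma> ` tside N TE a b"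
    have XED: "X \<subseteq> ED" using imL unfolding X_def L_def tside_def by auto
    have "(rep \<circ> \<sigma>) ` tside N TE a b = rep ` X" unfolding X_def image_comp ..
    also have "\<dots> = {e \<in> (rep \<circ> \<sigma>) ` L. edge_map e \<in> X}"
      unfolding im0 using XED rep by (intro set_eqI) auto
    finally have "(rep \<circ> \<sigma>) ` tside N TE a b = {e \<in> (rep \<circ> \<sigma>) ` L. edge_map e \<in> X}" .
    moreover have "X \<in> Xs" unfolding Xs_def X_def using ab by auto
    ultimately show ?thesis unfolding fibred_cut_def by blast
  qed
  ultimately obtain N' TE' \<tau> where T': "is_tree N' TE'" "\<forall>n\<in>N'. tdeg TE' n \<le> 3"
      "bij_betw \<tau> (tleaves N' TE') EH" "\<forall>a b. {a, b} \<in> TE' \<longrightarrow> fibred_cut edge_map Xs EH (\<tau> ` tside N' TE' a b)"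
    using expand_decomposition[OF finite_EH T, of "rep \<circ> \<sigma>" edge_map Xs] unfolding L_def by blast
  have "decomp_width (ug_order EH u_ends) N' TE' \<tau> \<le> w"
  proof (rule decomp_width_le[OF T'(1)])
    fix a b assume "{a, b} \<in> TE'"
    then have "fibred_cut edge_map Xs EH (\<tau> ` tside N' TE' a b)" using T'(4) by blast
    moreover have "\<tau> ` tside N' TE' a b \<subseteq> EH"
      using T'(3) unfolding bij_betw_def tside_def by auto
    moreover have "\<forall>X\<in>Xs. dbw_order ED X \<le> w"
      unfolding Xs_def w_def using decomp_width_ge[OF T(1)] by blast
    moreover have "\<forall>d\<in>ED. dbw_order ED {d} \<le> w"
      unfolding w_def using dbw_order_singleton_le[OF dec] by blast
    ultimately show "ug_order EH u_ends (\<tau> ` tside N' TE' a b) \<le> w"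
      by (intro ug_order_fibred_cut_le)
  qed
  then show ?thesis using T' unfolding branch_decomposition_def w_def by blast
qed

text \<open>Keep only the leaves labelled by representatives and push the labels forward to D.\<close>

lemma decomposition_push:
  assumes dec: "branch_decomposition N TE \<tau> EH"
  shows "\<exists>N' TE' \<sigma>. branch_decomposition N' TE' \<sigma> ED \<and>
    decomp_width (dbw_order ED) N' TE' \<sigma> \<le> decomp_width (ug_order EH u_ends) N TE \<tau>"
proof -
  have T: "is_tree N TE" "\<forall>n\<in>N. tdeg TE n \<le> 3" and bij: "bij_betw \<tau> (tleaves N TE) EH"
    using dec unfolding branch_decomposition_def by auto
  define L where "L = tleaves N TE"
  have injL: "inj_on \<tau> L" and imL: "\<tau> ` L = EH" using bij unfolding bij_betw_def L_def by auto
  show ?thesis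
  proof (cases "EH = {}")
    case True
    then have "L = {}" "ED = {}" using imL ED_eq_image by auto
    then show ?thesis
      using T decomp_width_no_leaves[OF T(1), of "dbw_order ED" "edge_map \<circ> \<tau>"] dbw_order_full[of ED]
      unfolding branch_decomposition_def L_def
      by (intro exI[of _ N] exI[of _ TE] exI[of _ "edge_map \<circ> \<tau>"]) (auto simp: bij_betw_def)
  next
    case False
    define M where "M = {x \<in> L. \<tau> x \<in> rep ` ED}"
    have "\<tau> ` M = rep ` ED" using imL rep unfolding M_def by force
    moreover have "inj_on \<tau> M" using injL unfolding M_def by (auto intro: inj_on_subset)
    ultimately have bM: "bij_betw (edge_map \<circ> \<tau>) M ED"
      using bij_betw_edge_map_rep by (metis bij_betw_def bij_betw_trans)
    then have "M \<noteq> {}" using False ED_eq_image unfolding bij_betw_def by auto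
    then obtain N' TE' where R: "is_tree N' TE'" "\<forall>n\<in>N'. tdeg TE' n \<le> 3" "tleaves N' TE' = M"
        "TE' \<subseteq> TE" "\<forall>a b. {a, b} \<in> TE' \<longrightarrow> tside N' TE' a b = tside N TE a b \<inter> M"
      using is_tree_restrict_leaves[OF T, of M] unfolding M_def L_def by blast
    have "dbw_order ED ((edge_map \<circ> \<tau>) ` tside N' TE' a b) \<le> decomp_width (ug_order EH u_ends) N TE \<tau>"
      if ab: "{a, b} \<in> TE'" for a b
    proof -
      define S where "S = tside N TE a b"
      have SL: "S \<subseteq> L" unfolding S_def L_def tside_def by auto
      have side: "tside N' TE' a b = S \<inter> M" using R(5) ab unfolding S_def by blast
      have "ED - (edge_map \<circ> \<tau>) ` (S \<inter> M) \<subseteq> edge_map ` (EH - \<tau> ` S)"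
      proof
        fix d assume d: "d \<in> ED - (edge_map \<circ> \<tau>) ` (S \<inter> M)"
        then obtain m where m: "m \<in> M" "edge_map (\<tau> m) = d" using bM unfolding bij_betw_def by auto
        then have "m \<notin> S" using d by auto
        then have "\<tau> m \<notin> \<tau> ` S" using injL SL m(1) unfolding M_def inj_on_def by auto
        then show "d \<in> edge_map ` (EH - \<tau> ` S)" using m imL unfolding M_def by auto
      qed
      then have "dbw_order ED ((edge_map \<circ> \<tau>) ` (S \<inter> M)) \<le> ug_order EH u_ends (\<tau> ` S)"
        using imL SL by (intro dbw_order_le_ug_order) auto
      also have "\<dots> \<le> decomp_width (ug_order EH u_ends) N TE \<tau>"
        unfolding S_def using decomp_width_ge[OF T(1)] ab R(4) by blast
      finally show ?thesis unfolding side .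
    qed
    then have "decomp_width (dbw_order ED) N' TE' (edge_map \<circ> \<tau>) \<le> decomp_width (ug_order EH u_ends) N TE \<tau>"
      by (rule decomp_width_le[OF R(1)])
    then show ?thesis using R bM unfolding branch_decomposition_def by auto
  qed
qed

theorem branch_width_eq_dir_branch_width: "branch_width EH u_ends = dir_branch_width ED"
  unfolding branch_width_def dir_branch_width_def
  using decomposition_push decomposition_lift by (rule gen_branch_width_eqI)

end

theorem mainTheorem11:
  fixes VD :: "'b set" and ED :: "('b \<times> 'b) set"
    and VH :: "'a set" and EH :: "('a \<times> 'a) set"
  assumes "wf_digraph VD ED"
    and "source_sink_split VH EH VD ED"
  shows "branch_width EH u_ends = dir_branch_width ED"
proof -
  obtain \<phi> where "ED = (\<lambda>(a, b). (\<phi> a, \<phi> b)) ` EH" "merges_only_terminals VH EH \<phi>"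
    using source_sink_split_map[OF assms(2)] .
  then interpret split_map VH EH VD ED \<phi>
    using assms unfolding split_map_def source_sink_split_def by blast
  show ?thesis by (rule branch_width_eq_dir_branch_width)
qed

end
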